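(* Let $N\ge1$, $R>0$, $m>1$, $p>1$, $\gamma>0$, $k\in\mathbb N$, $\alpha,\beta\in\mathbb R$ with $N+\alpha-m>0$ and $\beta-\alpha+1>0$. Let $g:[0,\infty)\to[0,\infty)$ be continuous and nondecreasing, $g_k(s)=g(\min\{k,s\})$ for $s\ge 0$ (extended to $s<0$ by $g_k(s)=g(\max\{-k,\min\{k,s\}\})$ where defined, in particular only nonnegative arguments matter on the cone below), and let $a:[0,\infty)\to(0,\infty)$ be continuous with $c_1\le a\le c_2$ for constants $0<c_1\le c_2$. Let $X=C[0,R]$ with the sup norm and $\mathcal C=\{v\in X: v\ge0,\ v(R)=0\}$. Define $$F(v)(r)=\int_r^R\Big[\frac{(a(s)+g_k(v(s)))^\gamma}{s^{N+\alpha-1}}\int_0^s\tau^{N+\beta-1}|v(\tau)|^p\,d\tau\Big]^{\frac1{m-1}}ds.$$ Then $F$ is compact and $F(\mathcal C)\subset\mathcal C$. *)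

theory Defs
  imports "HOL-Analysis.Analysis"
begin

text \<open>Sup norm on C[0,R]; elements of X = C[0,R] are represented by functions
  real \<Rightarrow> real, only their values on [0,R] being relevant.\<close>
definition supn :: "real \<Rightarrow> (real \<Rightarrow> real) \<Rightarrow> real" where
  "supn R v = (SUP x\<in>{0..R}. \<bar>v x\<bar>)"

definition cone :: "real \<Rightarrow> (real \<Rightarrow> real) set" where
  "cone R = {v. continuous_on {0..R} v \<and> (\<forall>x\<in>{0..R}. 0 \<le> v x) \<and> v R = 0}"

definition gk :: "nat \<Rightarrow> (real \<Rightarrow> real) \<Rightarrow> real \<Rightarrow> real" where
  "gk k g s = g (max (- real k) (min (real k) s))"

definition Fop :: "nat \<Rightarrow> real \<Rightarrow> real \<Rightarrow> real \<Rightarrow> real \<Rightarrow> real \<Rightarrow> (real \<Rightarrow> real)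
    \<Rightarrow> (real \<Rightarrow> real) \<Rightarrow> nat \<Rightarrow> real \<Rightarrow> (real \<Rightarrow> real) \<Rightarrow> real \<Rightarrow> real" where
  "Fop N \<alpha> \<beta> m p \<gamma> a g k R v r =
     integral {r..R} (\<lambda>s. ((a s + gk k g (v s)) powr \<gamma> / s powr (real N + \<alpha> - 1)
        * integral {0..s} (\<lambda>\<tau>. \<tau> powr (real N + \<beta> - 1) * \<bar>v \<tau>\<bar> powr p)) powr (1 / (m - 1)))"

text \<open>A (possibly nonlinear) operator F defined on D \<subseteq> C[0,R] is compact if it is
  continuous w.r.t. the sup norm and maps bounded sets to relatively compact sets of
  C[0,R] (sequential form: every bounded sequence in D has a subsequence whose images
  converge uniformly on [0,R] to some u in C[0,R]).\<close>
definition compact_op :: "real \<Rightarrow> (real \<Rightarrow> real) set \<Rightarrow> ((real \<Rightarrow> real) \<Rightarrow> (real \<Rightarrow> real)) \<Rightarrow> bool" where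
  "compact_op R D F \<longleftrightarrow>
     (\<forall>v\<in>D. \<forall>\<epsilon>::real>0. \<exists>\<delta>::real>0. \<forall>w\<in>D. supn R (\<lambda>x. w x - v x) < \<delta> \<longrightarrow>
         supn R (\<lambda>x. F w x - F v x) < \<epsilon>) \<and>
     (\<forall>vs. (\<forall>n. vs n \<in> D) \<and> (\<exists>M::real. \<forall>n. supn R (vs n) \<le> M) \<longrightarrow>
        (\<exists>(\<sigma>::nat\<Rightarrow>nat) u. strict_mono \<sigma> \<and> continuous_on {0..R} u \<and>
           (\<lambda>n. supn R (\<lambda>x. F (vs (\<sigma> n)) x - u x)) \<longlonglongrightarrow> 0))"

end

theory Submission
  imports Defs "HOL-Complex_Analysis.Great_Picard"
begin

(*
  F v is the tail integral r \<mapsto> \<integral>[r,R] \<Phi> v of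
    \<Phi> v s = (A v s ^ \<gamma> * s ^ -(N + \<alpha> - 1) * H v s) ^ (1 / (m - 1)),
  where H v s = \<integral>[0,s] \<tau> ^ (N + \<beta> - 1) * \<bar>v \<tau>\<bar> ^ p \<le> M ^ p * s ^ (N + \<beta>) / (N + \<beta>)
  whenever \<bar>v\<bar> \<le> M. So s ^ -(N + \<alpha> - 1) * H v s = O(s ^ (\<beta> - \<alpha> + 1)) vanishes at 0,
  and \<Phi> v is continuous on [0,R], nonnegative and bounded in terms of M alone. Hence F v
  lies in the cone, and the images of a bounded set are uniformly bounded and
  equi-Lipschitz, so Arzela-Ascoli gives compactness. Continuity of F follows from
  dominated convergence, because \<integral>[0,R] \<bar>\<Phi> w - \<Phi> v\<bar> dominates the sup distance
  of F w and F v.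
*)

section \<open>The sup norm\<close>

lemma supn_upper:
  assumes "continuous_on {0..R} f" "x \<in> {0..R}"
  shows "\<bar>f x\<bar> \<le> supn R f"
proof -
  have "compact ((\<lambda>x. \<bar>f x\<bar>) ` {0..R})"
    by (intro compact_continuous_image continuous_intros assms) simp
  then have "bdd_above ((\<lambda>x. \<bar>f x\<bar>) ` {0..R})"
    by (meson bounded_imp_bdd_above compact_imp_bounded)
  then show ?thesis unfolding supn_def using assms(2) by (rule cSUP_upper2) simp
qed

lemma supn_least:
  assumes "0 \<le> R" "\<And>x. x \<in> {0..R} \<Longrightarrow> \<bar>f x\<bar> \<le> B"
  shows "supn R f \<le> B"
  unfolding supn_def using assms by (intro cSUP_least) auto

lemma supn_nonneg:
  assumes "continuous_on {0..R} f" "0 \<le> R"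
  shows "0 \<le> supn R f"
  using supn_upper[OF assms(1), of 0] assms(2) by force

lemma supn_tendsto_zeroI:
  assumes R: "0 \<le> R" and f: "\<And>n. continuous_on {0..R} (f n)"
    and unif: "\<And>e. 0 < e \<Longrightarrow> \<exists>N. \<forall>n\<ge>N. \<forall>x\<in>{0..R}. \<bar>f n x\<bar> \<le> e"
  shows "(\<lambda>n. supn R (f n)) \<longlonglongrightarrow> 0"
proof (rule LIMSEQ_I)
  fix e :: real assume "0 < e"
  then obtain N where N: "\<forall>n\<ge>N. \<forall>x\<in>{0..R}. \<bar>f n x\<bar> \<le> e / 2"
    using unif[of "e / 2"] by auto
  have "norm (supn R (f n) - 0) < e" if "n \<ge> N" for n
    using supn_nonneg[OF f R, of n] supn_least[OF R, of "f n" "e / 2"] N that \<open>0 < e\<close> by auto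
  then show "\<exists>N. \<forall>n\<ge>N. norm (supn R (f n) - 0) < e" by blast
qed

lemma supn_tendsto_zeroD:
  assumes "\<And>n. continuous_on {0..R} (f n)" "(\<lambda>n. supn R (f n)) \<longlonglongrightarrow> 0" "x \<in> {0..R}"
  shows "(\<lambda>n. f n x) \<longlonglongrightarrow> 0"
  by (rule Lim_null_comparison[OF _ assms(2)]) (use supn_upper[OF assms(1,3)] in auto)

lemma supn_continuity_sequentially:
  assumes R: "0 \<le> R" and D: "\<And>w. w \<in> D \<Longrightarrow> continuous_on {0..R} w" and v: "v \<in> D"
    and seq: "\<And>ws. (\<And>n. ws n \<in> D) \<Longrightarrow> (\<lambda>n. supn R (\<lambda>x. ws n x - v x)) \<longlonglongrightarrow> 0
                \<Longrightarrow> (\<lambda>n. supn R (\<lambda>x. F (ws n) x - F v x)) \<longlonglongrightarrow> 0"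
    and "0 < \<epsilon>"
  shows "\<exists>\<delta>>0. \<forall>w\<in>D. supn R (\<lambda>x. w x - v x) < \<delta> \<longrightarrow> supn R (\<lambda>x. F w x - F v x) < \<epsilon>"
proof (rule ccontr)
  assume "\<not> ?thesis"
  then have "\<forall>n. \<exists>w\<in>D. supn R (\<lambda>x. w x - v x) < inverse (real (Suc n)) \<and>
      \<not> supn R (\<lambda>x. F w x - F v x) < \<epsilon>"
    by (metis inverse_positive_iff_positive of_nat_0_less_iff zero_less_Suc)
  then obtain ws where ws: "\<And>n. ws n \<in> D"
    and close: "\<And>n. supn R (\<lambda>x. ws n x - v x) < inverse (real (Suc n))"
    and far: "\<And>n. \<not> supn R (\<lambda>x. F (ws n) x - F v x) < \<epsilon>"
    by metis
  have "norm (supn R (\<lambda>x. ws n x - v x)) \<le> inverse (real (Suc n))" for n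
  proof -
    have "continuous_on {0..R} (\<lambda>x. ws n x - v x)"
      using D[OF ws] D[OF v] by (intro continuous_intros)
    then show ?thesis using close[of n] supn_nonneg[OF _ R] by fastforce
  qed
  then have "(\<lambda>n. supn R (\<lambda>x. ws n x - v x)) \<longlonglongrightarrow> 0"
    by (intro Lim_null_comparison[OF _ LIMSEQ_inverse_real_of_nat] always_eventually) blast
  from LIMSEQ_D[OF seq[OF ws this] \<open>0 < \<epsilon>\<close>] obtain n
    where "\<bar>supn R (\<lambda>x. F (ws n) x - F v x)\<bar> < \<epsilon>" by auto
  with far[of n] show False by simp
qed


lemma supn_convergence_pointwise_bounded:
  assumes ws: "\<And>n. continuous_on {0..R} (ws n)" and v: "continuous_on {0..R} v"
    and lim: "(\<lambda>n. supn R (\<lambda>x. ws n x - v x)) \<longlonglongrightarrow> 0"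
  obtains M where "\<And>n x. x \<in> {0..R} \<Longrightarrow> \<bar>ws n x\<bar> \<le> M" "\<And>x. x \<in> {0..R} \<Longrightarrow> \<bar>v x\<bar> \<le> M"
    and "\<And>x. x \<in> {0..R} \<Longrightarrow> (\<lambda>n. ws n x) \<longlonglongrightarrow> v x"
proof -
  have diff: "continuous_on {0..R} (\<lambda>x. ws n x - v x)" for n
    using ws v by (intro continuous_intros)
  obtain C where C: "\<And>n. \<bar>supn R (\<lambda>x. ws n x - v x)\<bar> \<le> C"
    using BseqE[OF convergent_imp_Bseq[OF convergentI[OF lim]]] by (metis real_norm_def)
  obtain Mv where Mv: "\<And>x. x \<in> {0..R} \<Longrightarrow> \<bar>v x\<bar> \<le> Mv"
    using supn_upper[OF v] by blast
  show thesis
  proof (rule that[of "Mv + C"])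
    show "\<bar>ws n x\<bar> \<le> Mv + C" if "x \<in> {0..R}" for n x
      using supn_upper[OF diff that, of n] C[of n] Mv[OF that] by linarith
    show "\<bar>v x\<bar> \<le> Mv + C" if "x \<in> {0..R}" for x
      using Mv[OF that] C[of 0] by linarith
    show "(\<lambda>n. ws n x) \<longlonglongrightarrow> v x" if "x \<in> {0..R}" for x
      using tendsto_add[OF supn_tendsto_zeroD[OF diff lim that] tendsto_const[of "v x"]] by simp
  qed
qed

lemma Arzela_Ascoli_equi_lipschitz:
  fixes f :: "nat \<Rightarrow> real \<Rightarrow> real"
  assumes R: "0 \<le> R" and f: "\<And>n. continuous_on {0..R} (f n)"
    and bounded: "\<And>n x. x \<in> {0..R} \<Longrightarrow> \<bar>f n x\<bar> \<le> B"
    and K: "0 \<le> K"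
    and lipschitz: "\<And>n x y. x \<in> {0..R} \<Longrightarrow> y \<in> {0..R} \<Longrightarrow> \<bar>f n x - f n y\<bar> \<le> K * \<bar>x - y\<bar>"
  shows "\<exists>(\<sigma> :: nat \<Rightarrow> nat) u. strict_mono \<sigma> \<and> continuous_on {0..R} u \<and>
           (\<lambda>n. supn R (\<lambda>x. f (\<sigma> n) x - u x)) \<longlonglongrightarrow> 0"
proof -
  obtain u \<sigma> where u: "continuous_on {0..R} u" and \<sigma>: "strict_mono (\<sigma> :: nat \<Rightarrow> nat)"
    and uniform: "\<And>e. 0 < e \<Longrightarrow> \<exists>N. \<forall>n x. n \<ge> N \<and> x \<in> {0..R} \<longrightarrow> norm (f (\<sigma> n) x - u x) < e"
  proof (rule Arzela_Ascoli[of "{0..R}" f B])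
    fix x e :: real assume x: "x \<in> {0..R}" and e: "0 < e"
    define d where "d = e / (K + 1)"
    show "\<exists>d>0. \<forall>n y. y \<in> {0..R} \<and> norm (x - y) < d \<longrightarrow> norm (f n x - f n y) < e"
    proof (intro exI[of _ d] conjI allI impI)
      show "0 < d"
        unfolding d_def using e K by simp
      fix n y assume y: "y \<in> {0..R} \<and> norm (x - y) < d"
      have "\<bar>f n x - f n y\<bar> \<le> K * \<bar>x - y\<bar>"
        using lipschitz x y by blast
      also have "\<dots> \<le> K * d"
        using y K by (intro mult_left_mono) auto
      also have "\<dots> < e"
        unfolding d_def using e K by (simp add: field_simps)
      finally show "norm (f n x - f n y) < e" by simp
    qed
  qed (use bounded in auto)
  have "(\<lambda>n. supn R (\<lambda>x. f (\<sigma> n) x - u x)) \<longlonglongrightarrow> 0"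
  proof (rule supn_tendsto_zeroI[OF R])
    show "continuous_on {0..R} (\<lambda>x. f (\<sigma> n) x - u x)" for n
      using f u by (intro continuous_intros)
    show "\<exists>N. \<forall>n\<ge>N. \<forall>x\<in>{0..R}. \<bar>f (\<sigma> n) x - u x\<bar> \<le> e" if "0 < e" for e
      using uniform[OF that] by (fastforce intro: less_imp_le)
  qed
  with u \<sigma> show ?thesis by blast
qed

section \<open>Operators given by tail integrals\<close>

lemma tail_integral_in_cone:
  fixes f :: "real \<Rightarrow> real"
  assumes f: "continuous_on {0..R} f" and nonneg: "\<And>s. s \<in> {0..R} \<Longrightarrow> 0 \<le> f s"
  shows "(\<lambda>r. integral {r..R} f) \<in> cone R"
proof -
  have "continuous_on {0..R} (\<lambda>r. integral {r..R} f)"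
    by (intro indefinite_integral_continuous_1' integrable_continuous_interval f)
  moreover have "0 \<le> integral {r..R} f" if "r \<in> {0..R}" for r
    using that by (intro integral_nonneg integrable_continuous_interval
        continuous_on_subset[OF f] nonneg) auto
  ultimately show ?thesis unfolding cone_def by auto
qed

lemma tail_integral_lipschitz:
  fixes f :: "real \<Rightarrow> real"
  assumes f: "continuous_on {0..R} f" and K: "\<And>s. s \<in> {0..R} \<Longrightarrow> \<bar>f s\<bar> \<le> K"
    and x: "x \<in> {0..R}" and y: "y \<in> {0..R}"
  shows "\<bar>integral {x..R} f - integral {y..R} f\<bar> \<le> K * \<bar>x - y\<bar>"
proof -
  have int: "f integrable_on {s..t}" if "{s..t} \<subseteq> {0..R}" for s t
    by (rule integrable_continuous_interval[OF continuous_on_subset[OF f that]])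
  have *: "\<bar>integral {x..R} f - integral {y..R} f\<bar> \<le> K * (y - x)"
    if x: "x \<in> {0..R}" and y: "y \<in> {0..R}" and xy: "x \<le> y" for x y
  proof -
    have "integral {x..y} f + integral {y..R} f = integral {x..R} f"
      using x y xy by (intro Henstock_Kurzweil_Integration.integral_combine int) auto
    moreover have "norm (integral {x..y} f) \<le> integral {x..y} (\<lambda>_. K)"
      using x y xy K by (intro integral_norm_bound_integral int) auto
    ultimately show ?thesis using xy by (simp add: mult.commute)
  qed
  show ?thesis
    using *[OF x y] *[OF y x] by (cases "x \<le> y") (auto simp: abs_minus_commute)
qed

lemma supn_tail_integral_diff_le:
  fixes f g :: "real \<Rightarrow> real"
  assumes R: "0 \<le> R" and f: "continuous_on {0..R} f" and g: "continuous_on {0..R} g"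
  shows "supn R (\<lambda>r. integral {r..R} f - integral {r..R} g) \<le> integral {0..R} (\<lambda>s. \<bar>f s - g s\<bar>)"
proof (rule supn_least[OF R])
  fix r assume r: "r \<in> {0..R}"
  have int: "h integrable_on {r..R}" if "continuous_on {0..R} h" for h :: "real \<Rightarrow> real"
    using r by (intro integrable_continuous_interval continuous_on_subset[OF that]) auto
  have "\<bar>integral {r..R} f - integral {r..R} g\<bar> = norm (integral {r..R} (\<lambda>s. f s - g s))"
    using int[OF f] int[OF g] by (simp add: integral_diff)
  also have "\<dots> \<le> integral {r..R} (\<lambda>s. \<bar>f s - g s\<bar>)"
    using f g by (intro integral_norm_bound_integral int continuous_intros) auto
  also have "\<dots> \<le> integral {0..R} (\<lambda>s. \<bar>f s - g s\<bar>)"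
    using r f g by (intro integral_subset_le integrable_continuous_interval continuous_intros int) auto
  finally show "\<bar>integral {r..R} f - integral {r..R} g\<bar> \<le> integral {0..R} (\<lambda>s. \<bar>f s - g s\<bar>)" .
qed

locale tail_integral_operator =
  fixes R :: real and D :: "(real \<Rightarrow> real) set" and \<Phi> :: "(real \<Rightarrow> real) \<Rightarrow> real \<Rightarrow> real"
  assumes R_nonneg: "0 \<le> R"
    and domain_continuous: "\<And>v. v \<in> D \<Longrightarrow> continuous_on {0..R} v"
    and integrand_continuous: "\<And>v. v \<in> D \<Longrightarrow> continuous_on {0..R} (\<Phi> v)"
    and integrand_bounded:
      "\<And>M. \<exists>K. \<forall>v\<in>D. (\<forall>x\<in>{0..R}. \<bar>v x\<bar> \<le> M) \<longrightarrow> (\<forall>s\<in>{0..R}. \<bar>\<Phi> v s\<bar> \<le> K)"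
    and integrand_tendsto:
      "\<And>ws v M s. (\<And>n. ws n \<in> D) \<Longrightarrow> v \<in> D \<Longrightarrow> (\<And>n x. x \<in> {0..R} \<Longrightarrow> \<bar>ws n x\<bar> \<le> M)
        \<Longrightarrow> (\<And>x. x \<in> {0..R} \<Longrightarrow> (\<lambda>n. ws n x) \<longlonglongrightarrow> v x) \<Longrightarrow> s \<in> {0..R}
        \<Longrightarrow> (\<lambda>n. \<Phi> (ws n) s) \<longlonglongrightarrow> \<Phi> v s"
begin

definition F :: "(real \<Rightarrow> real) \<Rightarrow> real \<Rightarrow> real" where
  "F v r = integral {r..R} (\<Phi> v)"

lemma F_continuous: "v \<in> D \<Longrightarrow> continuous_on {0..R} (F v)"
  unfolding F_def[abs_def]
  by (intro indefinite_integral_continuous_1' integrable_continuous_interval integrand_continuous)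

lemma bounded_sequence_has_convergent_image:
  assumes vs: "\<And>n. vs n \<in> D" and M: "\<And>n. supn R (vs n) \<le> M"
  shows "\<exists>(\<sigma> :: nat \<Rightarrow> nat) u. strict_mono \<sigma> \<and> continuous_on {0..R} u \<and>
           (\<lambda>n. supn R (\<lambda>x. F (vs (\<sigma> n)) x - u x)) \<longlonglongrightarrow> 0"
proof -
  have "\<bar>vs n x\<bar> \<le> M" if "x \<in> {0..R}" for n x
    using supn_upper[OF domain_continuous[OF vs[of n]] that] M[of n] by linarith
  moreover obtain K where
    "\<forall>v\<in>D. (\<forall>x\<in>{0..R}. \<bar>v x\<bar> \<le> M) \<longrightarrow> (\<forall>s\<in>{0..R}. \<bar>\<Phi> v s\<bar> \<le> K)"
    using integrand_bounded by blast
  ultimately have K: "\<And>n s. s \<in> {0..R} \<Longrightarrow> \<bar>\<Phi> (vs n) s\<bar> \<le> K"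
    using vs by blast
  have K_nonneg: "0 \<le> K"
    using K[of 0 0] R_nonneg by auto
  have lipschitz: "\<bar>F (vs n) x - F (vs n) y\<bar> \<le> K * \<bar>x - y\<bar>" if "x \<in> {0..R}" "y \<in> {0..R}" for n x y
    unfolding F_def using integrand_continuous[OF vs] K that by (rule tail_integral_lipschitz)
  have "\<bar>F (vs n) x\<bar> \<le> K * R" if x: "x \<in> {0..R}" for n x
  proof -
    have "\<bar>F (vs n) x\<bar> \<le> K * \<bar>x - R\<bar>"
      using lipschitz[OF x, of R n] R_nonneg by (simp add: F_def)
    also have "\<dots> \<le> K * R"
      using x K_nonneg by (intro mult_left_mono) auto
    finally show ?thesis .
  qed
  then show ?thesis
    using F_continuous[OF vs] K_nonneg lipschitz
    by (intro Arzela_Ascoli_equi_lipschitz[OF R_nonneg, where f = "\<lambda>n. F (vs n)"])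
qed

lemma F_sequentially_continuous:
  assumes ws: "\<And>n. ws n \<in> D" and v: "v \<in> D"
    and lim: "(\<lambda>n. supn R (\<lambda>x. ws n x - v x)) \<longlonglongrightarrow> 0"
  shows "(\<lambda>n. supn R (\<lambda>x. F (ws n) x - F v x)) \<longlonglongrightarrow> 0"
proof -
  obtain M where ws_bounded: "\<And>n x. x \<in> {0..R} \<Longrightarrow> \<bar>ws n x\<bar> \<le> M"
    and v_bounded: "\<And>x. x \<in> {0..R} \<Longrightarrow> \<bar>v x\<bar> \<le> M"
    and pointwise: "\<And>x. x \<in> {0..R} \<Longrightarrow> (\<lambda>n. ws n x) \<longlonglongrightarrow> v x"
    using supn_convergence_pointwise_bounded[OF domain_continuous[OF ws] domain_continuous[OF v] lim]
    by blast
  obtain K where K: "\<forall>w\<in>D. (\<forall>x\<in>{0..R}. \<bar>w x\<bar> \<le> M) \<longrightarrow> (\<forall>s\<in>{0..R}. \<bar>\<Phi> w s\<bar> \<le> K)"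
    using integrand_bounded by blast
  define \<Delta> where "\<Delta> n s = \<bar>\<Phi> (ws n) s - \<Phi> v s\<bar>" for n s
  have \<Delta>_continuous: "continuous_on {0..R} (\<Delta> n)" for n
    unfolding \<Delta>_def using integrand_continuous[OF ws] integrand_continuous[OF v]
    by (intro continuous_intros)
  have "(\<lambda>n. integral {0..R} (\<Delta> n)) \<longlonglongrightarrow> integral {0..R} (\<lambda>_. 0)"
  proof (rule dominated_convergence(2))
    show "\<Delta> n integrable_on {0..R}" for n
      by (rule integrable_continuous_interval[OF \<Delta>_continuous])
    show "(\<lambda>_. 2 * K) integrable_on {0..R}" by (rule integrable_const_ivl)
    show "norm (\<Delta> n s) \<le> 2 * K" if "s \<in> {0..R}" for n s
    proof -
      have "\<bar>\<Phi> (ws n) s\<bar> \<le> K" "\<bar>\<Phi> v s\<bar> \<le> K"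
        using K ws[of n] v ws_bounded[of _ n] v_bounded that by blast+
      then show ?thesis unfolding \<Delta>_def by simp
    qed
    show "(\<lambda>n. \<Delta> n s) \<longlonglongrightarrow> 0" if "s \<in> {0..R}" for s
      unfolding \<Delta>_def using integrand_tendsto[OF ws v ws_bounded pointwise that]
      by (intro tendsto_rabs_zero LIM_zero)
  qed
  then have integral_lim: "(\<lambda>n. integral {0..R} (\<Delta> n)) \<longlonglongrightarrow> 0" by simp
  show ?thesis
  proof (rule Lim_null_comparison[OF always_eventually integral_lim], intro allI)
    fix n
    have "continuous_on {0..R} (\<lambda>x. F (ws n) x - F v x)"
      using F_continuous[OF ws] F_continuous[OF v] by (intro continuous_intros)
    then have "0 \<le> supn R (\<lambda>x. F (ws n) x - F v x)"
      using R_nonneg by (rule supn_nonneg)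
    moreover have "supn R (\<lambda>x. F (ws n) x - F v x) \<le> integral {0..R} (\<Delta> n)"
      unfolding F_def \<Delta>_def
      by (rule supn_tail_integral_diff_le[OF R_nonneg integrand_continuous[OF ws] integrand_continuous[OF v]])
    ultimately show "norm (supn R (\<lambda>x. F (ws n) x - F v x)) \<le> integral {0..R} (\<Delta> n)"
      by simp
  qed
qed

theorem compact_op_F: "compact_op R D F"
  unfolding compact_op_def
proof (intro conjI ballI allI impI)
  fix v and \<epsilon> :: real assume "v \<in> D" "0 < \<epsilon>"
  show "\<exists>\<delta>>0. \<forall>w\<in>D. supn R (\<lambda>x. w x - v x) < \<delta> \<longrightarrow> supn R (\<lambda>x. F w x - F v x) < \<epsilon>"
    by (rule supn_continuity_sequentially[where F = F, OF R_nonneg domain_continuous \<open>v \<in> D\<close>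
          F_sequentially_continuous[OF _ \<open>v \<in> D\<close>] \<open>0 < \<epsilon>\<close>])
next
  fix vs :: "nat \<Rightarrow> real \<Rightarrow> real" assume "(\<forall>n. vs n \<in> D) \<and> (\<exists>M. \<forall>n. supn R (vs n) \<le> M)"
  then obtain M where "\<And>n. vs n \<in> D" "\<And>n. supn R (vs n) \<le> M" by blast
  then show "\<exists>(\<sigma> :: nat \<Rightarrow> nat) u. strict_mono \<sigma> \<and> continuous_on {0..R} u \<and>
      (\<lambda>n. supn R (\<lambda>x. F (vs (\<sigma> n)) x - u x)) \<longlonglongrightarrow> 0"
    by (rule bounded_sequence_has_convergent_image)
qed

end

section \<open>Weighted power integrals\<close>

definition weighted_power_integral :: "real \<Rightarrow> real \<Rightarrow> (real \<Rightarrow> real) \<Rightarrow> real \<Rightarrow> real" where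
  "weighted_power_integral e p v s = integral {0..s} (\<lambda>\<tau>. \<tau> powr e * \<bar>v \<tau>\<bar> powr p)"

lemma weighted_power_integrable:
  fixes v :: "real \<Rightarrow> real"
  assumes e: "-1 < e" and p: "0 < p" and s: "0 \<le> s" and v: "continuous_on {0..s} v"
  shows "(\<lambda>\<tau>. \<tau> powr e * \<bar>v \<tau>\<bar> powr p) integrable_on {0..s}"
proof -
  have vp: "continuous_on {0..s} (\<lambda>\<tau>. \<bar>v \<tau>\<bar> powr p)"
    using v p by (intro continuous_on_powr' continuous_intros) auto
  have "(\<lambda>\<tau>. \<bar>v \<tau>\<bar> powr p * \<tau> powr e) absolutely_integrable_on {0..s}"
  proof (rule absolutely_integrable_bounded_measurable_product_real)
    show "(\<lambda>\<tau>. \<bar>v \<tau>\<bar> powr p) \<in> borel_measurable (lebesgue_on {0..s})"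
      using vp by (intro continuous_imp_measurable_on_sets_lebesgue) auto
    show "bounded ((\<lambda>\<tau>. \<bar>v \<tau>\<bar> powr p) ` {0..s})"
      by (intro compact_imp_bounded compact_continuous_image vp) simp
    show "(\<lambda>\<tau>. \<tau> powr e) absolutely_integrable_on {0..s}"
      using integrable_on_powr_from_0[OF e s] by (intro nonnegative_absolutely_integrable_1) auto
  qed auto
  then show ?thesis
    by (simp add: absolutely_integrable_on_def mult.commute)
qed

lemma weighted_power_integrand_le:
  fixes x M \<tau> e p :: real
  assumes "0 < p" "\<bar>x\<bar> \<le> M"
  shows "\<tau> powr e * \<bar>x\<bar> powr p \<le> M powr p * \<tau> powr e"
proof -
  have "\<bar>x\<bar> powr p \<le> M powr p"
    using assms by (intro powr_mono2) auto
  then show ?thesis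
    by (metis mult.commute mult_left_mono powr_ge_zero)
qed

lemma weighted_power_integral_bounds:
  fixes v :: "real \<Rightarrow> real"
  assumes e: "-1 < e" and p: "0 < p" and s: "0 \<le> s" and v: "continuous_on {0..s} v"
    and M: "\<And>\<tau>. \<tau> \<in> {0..s} \<Longrightarrow> \<bar>v \<tau>\<bar> \<le> M"
  shows "0 \<le> weighted_power_integral e p v s
    \<and> weighted_power_integral e p v s \<le> M powr p * (s powr (e + 1) / (e + 1))"
proof
  have int: "(\<lambda>\<tau>. \<tau> powr e * \<bar>v \<tau>\<bar> powr p) integrable_on {0..s}"
    by (rule weighted_power_integrable[OF e p s v])
  then show "0 \<le> weighted_power_integral e p v s"
    unfolding weighted_power_integral_def by (intro integral_nonneg) auto
  have majorant: "((\<lambda>\<tau>. M powr p * \<tau> powr e) has_integral M powr p * (s powr (e + 1) / (e + 1))) {0..s}"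
    using has_integral_powr_from_0[OF e s] by (rule has_integral_mult_right)
  have "weighted_power_integral e p v s \<le> integral {0..s} (\<lambda>\<tau>. M powr p * \<tau> powr e)"
    unfolding weighted_power_integral_def using int majorant
    by (intro integral_le weighted_power_integrand_le[OF p M]) auto
  with majorant show "weighted_power_integral e p v s \<le> M powr p * (s powr (e + 1) / (e + 1))"
    by (metis integral_unique)
qed

lemma weighted_power_quotient_bounds:
  fixes v :: "real \<Rightarrow> real"
  assumes e: "-1 < e" and p: "0 < p" and s: "0 \<le> s" and v: "continuous_on {0..s} v"
    and M: "\<And>\<tau>. \<tau> \<in> {0..s} \<Longrightarrow> \<bar>v \<tau>\<bar> \<le> M"
  shows "0 \<le> weighted_power_integral e p v s / s powr d
    \<and> weighted_power_integral e p v s / s powr d \<le> M powr p / (e + 1) * s powr (e + 1 - d)"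
proof (cases "s = 0")
  case True
  then show ?thesis by (simp add: weighted_power_integral_def)
next
  case False
  note bounds = weighted_power_integral_bounds[OF e p s v M]
  have "weighted_power_integral e p v s / s powr d \<le> M powr p * (s powr (e + 1) / (e + 1)) / s powr d"
    using bounds by (intro divide_right_mono) auto
  also have "\<dots> = M powr p / (e + 1) * s powr (e + 1 - d)"
    using False s by (simp add: powr_diff)
  finally show ?thesis
    using bounds by simp
qed

lemma continuous_on_atLeastAtMost_0I:
  fixes f :: "real \<Rightarrow> real"
  assumes "continuous_on {0<..R} f" and "(f \<longlongrightarrow> f 0) (at 0 within {0..R})"
  shows "continuous_on {0..R} f"
  unfolding continuous_on_eq_continuous_within
proof
  fix x assume x: "x \<in> {0..R}"
  show "continuous (at x within {0..R}) f"
  proof (cases "x = 0")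
    case True
    with assms(2) show ?thesis
      by (simp add: continuous_within)
  next
    case False
    with x have "at x within {0..R} = at x within {0<..R}"
      by (intro at_within_nhd[of x "{0<..}"]) auto
    with False x assms(1) show ?thesis
      by (simp add: continuous_on_eq_continuous_within)
  qed
qed

lemma weighted_power_quotient_tendsto_0:
  fixes v :: "real \<Rightarrow> real"
  assumes e: "-1 < e" and p: "0 < p" and decay: "0 < e + 1 - d" and v: "continuous_on {0..R} v"
  shows "((\<lambda>s. weighted_power_integral e p v s / s powr d) \<longlongrightarrow> 0) (at 0 within {0..R})"
proof -
  obtain M where M: "\<And>\<tau>. \<tau> \<in> {0..R} \<Longrightarrow> \<bar>v \<tau>\<bar> \<le> M"
    using supn_upper[OF v] by blast
  let ?Q = "\<lambda>s. weighted_power_integral e p v s / s powr d"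
  let ?C = "M powr p / (e + 1)"
  show ?thesis
  proof (rule tendsto_sandwich[OF _ _ tendsto_const])
    have "eventually (\<lambda>s. 0 \<le> s) (at 0 within {0..R})"
      by (auto simp: eventually_at_filter)
    then have "((\<lambda>s. s powr (e + 1 - d)) \<longlongrightarrow> 0 powr (e + 1 - d)) (at 0 within {0..R})"
      using decay by (intro tendsto_powr' tendsto_ident_at tendsto_const) auto
    then show "((\<lambda>s. ?C * s powr (e + 1 - d)) \<longlongrightarrow> 0) (at 0 within {0..R})"
      using tendsto_mult_right_zero by fastforce
    have "0 \<le> ?Q s \<and> ?Q s \<le> ?C * s powr (e + 1 - d)" if "s \<in> {0..R}" for s
      using that by (intro weighted_power_quotient_bounds[OF e p] continuous_on_subset[OF v] M) auto
    then show "eventually (\<lambda>s. 0 \<le> ?Q s) (at 0 within {0..R})"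
      and "eventually (\<lambda>s. ?Q s \<le> ?C * s powr (e + 1 - d)) (at 0 within {0..R})"
      by (auto simp: eventually_at_filter)
  qed
qed

(* At s = 0 the quotient is 0 / 0, which is 0 in Isabelle: exactly the continuous extension. *)
lemma weighted_power_quotient_continuous:
  fixes v :: "real \<Rightarrow> real"
  assumes e: "-1 < e" and p: "0 < p" and decay: "0 < e + 1 - d" and R: "0 \<le> R"
    and v: "continuous_on {0..R} v"
  shows "continuous_on {0..R} (\<lambda>s. weighted_power_integral e p v s / s powr d)"
proof (rule continuous_on_atLeastAtMost_0I)
  have "continuous_on {0..R} (weighted_power_integral e p v)"
    unfolding weighted_power_integral_def[abs_def]
    by (rule indefinite_integral_continuous_1[OF weighted_power_integrable[OF e p R v]])
  then have "continuous_on {0<..R} (weighted_power_integral e p v)"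
    by (rule continuous_on_subset) auto
  then show "continuous_on {0<..R} (\<lambda>s. weighted_power_integral e p v s / s powr d)"
    by (intro continuous_on_divide continuous_on_powr continuous_on_id continuous_on_const) auto
  show "((\<lambda>s. weighted_power_integral e p v s / s powr d) \<longlongrightarrow> weighted_power_integral e p v 0 / 0 powr d)
      (at 0 within {0..R})"
    using weighted_power_quotient_tendsto_0[OF e p decay v] by (simp add: weighted_power_integral_def)
qed

lemma weighted_power_integral_tendsto:
  fixes ws :: "nat \<Rightarrow> real \<Rightarrow> real"
  assumes e: "-1 < e" and p: "0 < p" and s: "0 \<le> s"
    and ws: "\<And>n. continuous_on {0..s} (ws n)"
    and M: "\<And>n \<tau>. \<tau> \<in> {0..s} \<Longrightarrow> \<bar>ws n \<tau>\<bar> \<le> M"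
    and lim: "\<And>\<tau>. \<tau> \<in> {0..s} \<Longrightarrow> (\<lambda>n. ws n \<tau>) \<longlonglongrightarrow> v \<tau>"
  shows "(\<lambda>n. weighted_power_integral e p (ws n) s) \<longlonglongrightarrow> weighted_power_integral e p v s"
  unfolding weighted_power_integral_def
proof (rule dominated_convergence(2))
  show "(\<lambda>\<tau>. \<tau> powr e * \<bar>ws n \<tau>\<bar> powr p) integrable_on {0..s}" for n
    by (rule weighted_power_integrable[OF e p s ws])
  show "(\<lambda>\<tau>. M powr p * \<tau> powr e) integrable_on {0..s}"
    using has_integral_mult_right[OF has_integral_powr_from_0[OF e s]] by blast
  show "norm (\<tau> powr e * \<bar>ws n \<tau>\<bar> powr p) \<le> M powr p * \<tau> powr e" if "\<tau> \<in> {0..s}" for n \<tau>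
    using weighted_power_integrand_le[OF p M[OF that]] by (simp add: abs_mult)
  show "(\<lambda>n. \<tau> powr e * \<bar>ws n \<tau>\<bar> powr p) \<longlonglongrightarrow> \<tau> powr e * \<bar>v \<tau>\<bar> powr p" if "\<tau> \<in> {0..s}" for \<tau>
    using lim[OF that] p by (intro tendsto_intros) auto
qed

section \<open>The operator F\<close>

lemma cone_continuous: "v \<in> cone R \<Longrightarrow> continuous_on {0..R} v"
  and cone_nonneg: "v \<in> cone R \<Longrightarrow> x \<in> {0..R} \<Longrightarrow> 0 \<le> v x"
  unfolding cone_def by auto

lemma cone_bounded:
  assumes "v \<in> cone R"
  obtains M where "\<And>x. x \<in> {0..R} \<Longrightarrow> \<bar>v x\<bar> \<le> M"
  using supn_upper[OF cone_continuous[OF assms]] by blast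

lemma gk_of_nonneg: "0 \<le> x \<Longrightarrow> gk k g x = g (min (real k) x)"
  unfolding gk_def by simp

lemma continuous_on_Icc_bounded:
  fixes f :: "real \<Rightarrow> real"
  assumes "continuous_on {a..b} f"
  obtains B where "\<And>x. x \<in> {a..b} \<Longrightarrow> \<bar>f x\<bar> \<le> B"
proof -
  have "bounded (f ` {a..b})"
    by (intro compact_imp_bounded compact_continuous_image assms compact_Icc)
  then show ?thesis
    unfolding bounded_real using that by blast
qed

locale Fop_data =
  fixes N k :: nat and m p \<gamma> \<alpha> \<beta> :: real and a g :: "real \<Rightarrow> real"
  assumes m_gt_1: "1 < m" and p_pos: "0 < p" and \<gamma>_pos: "0 < \<gamma>"
    and weight_exponent_pos: "0 < real N + \<beta>" and decay_exponent_pos: "0 < \<beta> - \<alpha> + 1"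
    and g_continuous: "continuous_on {0..} g" and g_nonneg: "\<And>s. 0 \<le> s \<Longrightarrow> 0 \<le> g s"
    and a_continuous: "continuous_on {0..} a" and a_nonneg: "\<And>s. 0 \<le> s \<Longrightarrow> 0 \<le> a s"
begin

definition coefficient :: "(real \<Rightarrow> real) \<Rightarrow> real \<Rightarrow> real" where
  "coefficient v s = (a s + gk k g (v s)) powr \<gamma>"

definition mass_quotient :: "(real \<Rightarrow> real) \<Rightarrow> real \<Rightarrow> real" where
  "mass_quotient v s = weighted_power_integral (real N + \<beta> - 1) p v s / s powr (real N + \<alpha> - 1)"

definition integrand :: "(real \<Rightarrow> real) \<Rightarrow> real \<Rightarrow> real" where
  "integrand v s = (coefficient v s * mass_quotient v s) powr (1 / (m - 1))"

lemma Fop_eq_tail_integral: "Fop N \<alpha> \<beta> m p \<gamma> a g k R v = (\<lambda>r. integral {r..R} (integrand v))"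
  unfolding Fop_def integrand_def coefficient_def mass_quotient_def weighted_power_integral_def
  by simp

lemma coefficient_base_nonneg:
  assumes "v \<in> cone R" "s \<in> {0..R}"
  shows "0 \<le> a s + gk k g (v s)"
  using cone_nonneg[OF assms] assms(2) by (simp add: gk_of_nonneg a_nonneg g_nonneg)

lemma coefficient_bounded: "\<exists>B. \<forall>v\<in>cone R. \<forall>s\<in>{0..R}. coefficient v s \<le> B"
proof -
  have "continuous_on {0..R} a" "continuous_on {0..real k} g"
    using a_continuous g_continuous by (auto elim: continuous_on_subset)
  then obtain Ba Bg where Ba: "\<And>s. s \<in> {0..R} \<Longrightarrow> \<bar>a s\<bar> \<le> Ba"
    and Bg: "\<And>x. x \<in> {0..real k} \<Longrightarrow> \<bar>g x\<bar> \<le> Bg"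
    by (metis continuous_on_Icc_bounded)
  have "coefficient v s \<le> (Ba + Bg) powr \<gamma>" if v: "v \<in> cone R" and s: "s \<in> {0..R}" for v s
  proof -
    have "gk k g (v s) \<le> Bg"
      using Bg[of "min (real k) (v s)"] cone_nonneg[OF v s] by (simp add: gk_of_nonneg)
    then have "a s + gk k g (v s) \<le> Ba + Bg"
      using Ba[OF s] by linarith
    then show ?thesis
      unfolding coefficient_def using coefficient_base_nonneg[OF v s] \<gamma>_pos
      by (intro powr_mono2) auto
  qed
  then show ?thesis by blast
qed

lemma coefficient_continuous:
  assumes v: "v \<in> cone R"
  shows "continuous_on {0..R} (coefficient v)"
proof -
  have clamp: "continuous_on {0..R} (\<lambda>s. max (- real k) (min (real k) (v s)))"
    using cone_continuous[OF v] by (intro continuous_intros)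
  have "continuous_on {0..R} (\<lambda>s. g (max (- real k) (min (real k) (v s))))"
    by (rule continuous_on_compose2[OF g_continuous clamp]) (auto dest: cone_nonneg[OF v])
  moreover have "continuous_on {0..R} a"
    using a_continuous by (rule continuous_on_subset) auto
  ultimately have "continuous_on {0..R} (\<lambda>s. a s + gk k g (v s))"
    unfolding gk_def by (intro continuous_on_add)
  then show ?thesis
    unfolding coefficient_def[abs_def] using coefficient_base_nonneg[OF v] \<gamma>_pos
    by (intro continuous_on_powr' continuous_on_const) auto
qed

lemma coefficient_tendsto:
  assumes ws: "\<And>n. ws n \<in> cone R" and v: "v \<in> cone R" and s: "s \<in> {0..R}"
    and lim: "(\<lambda>n. ws n s) \<longlonglongrightarrow> v s"
  shows "(\<lambda>n. coefficient (ws n) s) \<longlonglongrightarrow> coefficient v s"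
proof -
  have clamp: "(\<lambda>n. max (- real k) (min (real k) (ws n s))) \<longlonglongrightarrow> max (- real k) (min (real k) (v s))"
    by (intro tendsto_intros lim)
  have "max (- real k) (min (real k) (ws n s)) \<in> {0..}" for n
    using cone_nonneg[OF ws s, of n] by simp
  then have "\<forall>\<^sub>F n in sequentially. max (- real k) (min (real k) (ws n s)) \<in> {0..}"
    by (intro always_eventually) blast
  then have "(\<lambda>n. g (max (- real k) (min (real k) (ws n s)))) \<longlonglongrightarrow> g (max (- real k) (min (real k) (v s)))"
    using cone_nonneg[OF v s] by (intro continuous_on_tendsto_compose[OF g_continuous clamp]) auto
  then have "(\<lambda>n. a s + gk k g (ws n s)) \<longlonglongrightarrow> a s + gk k g (v s)"
    unfolding gk_def by (intro tendsto_add tendsto_const)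
  then show ?thesis
    unfolding coefficient_def using coefficient_base_nonneg[OF ws s] \<gamma>_pos
    by (intro tendsto_powr' tendsto_const) auto
qed

lemma mass_quotient_bounds:
  assumes v: "v \<in> cone R" and s: "s \<in> {0..R}" and M: "\<And>x. x \<in> {0..R} \<Longrightarrow> \<bar>v x\<bar> \<le> M"
  shows "0 \<le> mass_quotient v s \<and> mass_quotient v s \<le> M powr p / (real N + \<beta>) * s powr (\<beta> - \<alpha> + 1)"
proof -
  have "-1 < real N + \<beta> - 1"
    using weight_exponent_pos by simp
  from weighted_power_quotient_bounds[OF this p_pos, of s v M "real N + \<alpha> - 1"]
  show ?thesis
    using s M continuous_on_subset[OF cone_continuous[OF v], of "{0..s}"]
    unfolding mass_quotient_def by (auto simp: algebra_simps)
qed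

lemma mass_quotient_continuous:
  assumes "0 \<le> R" "v \<in> cone R"
  shows "continuous_on {0..R} (mass_quotient v)"
  unfolding mass_quotient_def[abs_def] using weight_exponent_pos decay_exponent_pos
  by (intro weighted_power_quotient_continuous p_pos assms cone_continuous) auto

lemma mass_quotient_tendsto:
  assumes ws: "\<And>n. ws n \<in> cone R" and M: "\<And>n x. x \<in> {0..R} \<Longrightarrow> \<bar>ws n x\<bar> \<le> M"
    and lim: "\<And>x. x \<in> {0..R} \<Longrightarrow> (\<lambda>n. ws n x) \<longlonglongrightarrow> v x" and s: "s \<in> {0..R}"
  shows "(\<lambda>n. mass_quotient (ws n) s) \<longlonglongrightarrow> mass_quotient v s"
proof -
  have "(\<lambda>n. weighted_power_integral (real N + \<beta> - 1) p (ws n) s)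
      \<longlonglongrightarrow> weighted_power_integral (real N + \<beta> - 1) p v s"
    using weight_exponent_pos s M lim
    by (intro weighted_power_integral_tendsto[where M = M] p_pos
        continuous_on_subset[OF cone_continuous[OF ws]]) auto
  then show ?thesis
    unfolding mass_quotient_def divide_inverse by (rule tendsto_mult_right)
qed

lemma integrand_continuous:
  assumes "0 \<le> R" and v: "v \<in> cone R"
  shows "continuous_on {0..R} (integrand v)"
proof -
  obtain M where M: "\<And>x. x \<in> {0..R} \<Longrightarrow> \<bar>v x\<bar> \<le> M"
    using cone_bounded[OF v] by blast
  have "0 \<le> coefficient v s * mass_quotient v s" if "s \<in> {0..R}" for s
    using mass_quotient_bounds[OF v that M] by (simp add: coefficient_def)
  then show ?thesis
    unfolding integrand_def[abs_def] using m_gt_1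
    by (intro continuous_on_powr' continuous_on_mult continuous_on_const
        coefficient_continuous mass_quotient_continuous assms) auto
qed

lemma integrand_bounded:
  "\<exists>K. \<forall>v\<in>cone R. (\<forall>x\<in>{0..R}. \<bar>v x\<bar> \<le> M) \<longrightarrow> (\<forall>s\<in>{0..R}. \<bar>integrand v s\<bar> \<le> K)"
proof -
  obtain B where B: "\<And>v s. v \<in> cone R \<Longrightarrow> s \<in> {0..R} \<Longrightarrow> coefficient v s \<le> B"
    using coefficient_bounded by blast
  define C where "C = M powr p / (real N + \<beta>) * R powr (\<beta> - \<alpha> + 1)"
  have "\<bar>integrand v s\<bar> \<le> (B * C) powr (1 / (m - 1))"
    if v: "v \<in> cone R" and M: "\<forall>x\<in>{0..R}. \<bar>v x\<bar> \<le> M" and s: "s \<in> {0..R}" for v s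
  proof -
    note quotient = mass_quotient_bounds[OF v s, of M]
    have "0 \<le> B"
      using B[OF v s] unfolding coefficient_def by (meson order_trans powr_ge_zero)
    have "mass_quotient v s \<le> M powr p / (real N + \<beta>) * s powr (\<beta> - \<alpha> + 1)"
      using quotient M by blast
    also have "\<dots> \<le> C"
      unfolding C_def using s decay_exponent_pos weight_exponent_pos
      by (intro mult_left_mono powr_mono2) auto
    finally have "mass_quotient v s \<le> C" .
    then have "coefficient v s * mass_quotient v s \<le> B * C"
      using quotient M B[OF v s] \<open>0 \<le> B\<close> by (intro mult_mono) (auto simp: coefficient_def)
    then show ?thesis
      unfolding integrand_def using quotient M m_gt_1
      by (auto simp: coefficient_def intro!: powr_mono2)
  qed
  then show ?thesis by blast
qed

lemma integrand_tendsto: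
  assumes ws: "\<And>n. ws n \<in> cone R" and v: "v \<in> cone R"
    and M: "\<And>n x. x \<in> {0..R} \<Longrightarrow> \<bar>ws n x\<bar> \<le> M"
    and lim: "\<And>x. x \<in> {0..R} \<Longrightarrow> (\<lambda>n. ws n x) \<longlonglongrightarrow> v x" and s: "s \<in> {0..R}"
  shows "(\<lambda>n. integrand (ws n) s) \<longlonglongrightarrow> integrand v s"
proof -
  have "(\<lambda>n. coefficient (ws n) s * mass_quotient (ws n) s) \<longlonglongrightarrow> coefficient v s * mass_quotient v s"
    by (intro tendsto_mult coefficient_tendsto[OF ws v s lim[OF s]] mass_quotient_tendsto[OF ws M lim s])
  moreover have "\<forall>\<^sub>F n in sequentially. 0 \<le> coefficient (ws n) s * mass_quotient (ws n) s"
    using mass_quotient_bounds[OF ws s M] by (intro always_eventually allI) (simp add: coefficient_def)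
  ultimately show ?thesis
    unfolding integrand_def using m_gt_1 by (intro tendsto_powr' tendsto_const) auto
qed

lemma tail_integral_operator_integrand:
  assumes "0 \<le> R"
  shows "tail_integral_operator R (cone R) integrand"
  by unfold_locales
    (fact assms | (rule cone_continuous integrand_continuous[OF assms] integrand_tendsto; assumption)
      | rule integrand_bounded)+

theorem compact_op_Fop: "0 \<le> R \<Longrightarrow> compact_op R (cone R) (Fop N \<alpha> \<beta> m p \<gamma> a g k R)"
proof -
  assume "0 \<le> R"
  then interpret tail_integral_operator R "cone R" integrand
    by (rule tail_integral_operator_integrand)
  have "Fop N \<alpha> \<beta> m p \<gamma> a g k R = F"
    by (intro ext) (simp add: Fop_eq_tail_integral F_def)
  with compact_op_F show ?thesis by simp
qed

lemma Fop_in_cone: "0 \<le> R \<Longrightarrow> v \<in> cone R \<Longrightarrow> Fop N \<alpha> \<beta> m p \<gamma> a g k R v \<in> cone R"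
  unfolding Fop_eq_tail_integral
  by (intro tail_integral_in_cone integrand_continuous) (auto simp: integrand_def)

end

theorem lemma6p1:
  fixes N k :: nat and R m p \<gamma> \<alpha> \<beta> c1 c2 :: real and a g :: "real \<Rightarrow> real"
  assumes "N \<ge> 1" and "R > 0" and "m > 1" and "p > 1" and "\<gamma> > 0"
    and "real N + \<alpha> - m > 0" and "\<beta> - \<alpha> + 1 > 0"
    and "continuous_on {0..} g" and "mono_on {0..} g" and "\<forall>s\<ge>0. g s \<ge> 0"
    and "continuous_on {0..} a" and "0 < c1" and "c1 \<le> c2"
    and "\<forall>s\<ge>0. c1 \<le> a s \<and> a s \<le> c2"
  shows "compact_op R (cone R) (Fop N \<alpha> \<beta> m p \<gamma> a g k R)
         \<and> (\<forall>v\<in>cone R. Fop N \<alpha> \<beta> m p \<gamma> a g k R v \<in> cone R)"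
proof -
  interpret Fop_data N k m p \<gamma> \<alpha> \<beta> a g
    by unfold_locales (use assms in auto)
  show ?thesis
    using compact_op_Fop Fop_in_cone \<open>R > 0\<close> by auto
qed

end
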